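(* Let $C$ be a cycle and $T$ a shortcut tree for $C$ with respect to a length-function $\ell$ on $T\cup C$, and assume $V(C)=L(T)$, $|L(T)|\ge 3$, and $T$ has no vertex of degree $2$. Let $e_0\in E(C)$ be arbitrary. Then for any two distinct edges $e_1,e_2$ of $C$ sharing an endpoint we have $\ell(e_1)+\ell(e_2)>\ell(e_0)$. In particular $\ell(e_0)<\ell(C)/2$.
   Context: Graphs are finite, parallel edges allowed, no loops. A length-function is a map $\ell:E\to\mathbb{R}^+$ (strictly positive reals); $\ell(H)=\sum_{e\in E(H)}\ell(e)$. $\mathrm{sd}_G(A)$ is the minimum of $\ell(S)$ over connected subgraphs $S\subseteq G$ with $A\subseteq V(S)$. $L(T)$ is the set of leaves of $T$. Shortcut tree: let $H$ be a graph, $T$ a tree, both subgraphs of $T\cup H$, and $\ell$ a length-function on $T\cup H$. Then $T$ is a shortcut tree for $H$ if (SCT1) $V(T)\cap V(H)=L(T)$; (SCT2) $E(T)\cap E(H)=\emptyset$; (SCT3) $\ell(T)<\mathrm{sd}_H(L(T))$; (SCT4) for every proper subset $B\subsetneq L(T)$, $\mathrm{sd}_H(B)\le\mathrm{sd}_T(B)$. *)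

theory Defs
  imports Main "HOL-Library.Extended_Real"
begin

text \<open>Multigraphs (parallel edges allowed, no loops) inside a common ambient graph:
  vertices of type 'v, edges of type 'e, and a global incidence map inc giving
  the (two-element) set of endpoints of each edge.\<close>

definition is_graph :: "('e \<Rightarrow> 'v set) \<Rightarrow> 'v set \<Rightarrow> 'e set \<Rightarrow> bool" where
  "is_graph inc V E \<longleftrightarrow> finite V \<and> finite E \<and> (\<forall>e\<in>E. inc e \<subseteq> V \<and> card (inc e) = 2)"

definition adj_rel :: "('e \<Rightarrow> 'v set) \<Rightarrow> 'e set \<Rightarrow> ('v \<times> 'v) set" where
  "adj_rel inc E = {(u, v). \<exists>e\<in>E. inc e = {u, v}}"

definition connected_graph :: "('e \<Rightarrow> 'v set) \<Rightarrow> 'v set \<Rightarrow> 'e set \<Rightarrow> bool" where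
  "connected_graph inc V E \<longleftrightarrow> is_graph inc V E \<and> V \<noteq> {} \<and>
     (\<forall>u\<in>V. \<forall>v\<in>V. (u, v) \<in> (adj_rel inc E)\<^sup>*)"

definition degree :: "('e \<Rightarrow> 'v set) \<Rightarrow> 'e set \<Rightarrow> 'v \<Rightarrow> nat" where
  "degree inc E v = card {e\<in>E. v \<in> inc e}"

definition is_tree :: "('e \<Rightarrow> 'v set) \<Rightarrow> 'v set \<Rightarrow> 'e set \<Rightarrow> bool" where
  "is_tree inc V E \<longleftrightarrow> connected_graph inc V E \<and> (\<forall>e\<in>E. \<not> connected_graph inc V (E - {e}))"

definition is_cycle :: "('e \<Rightarrow> 'v set) \<Rightarrow> 'v set \<Rightarrow> 'e set \<Rightarrow> bool" where
  "is_cycle inc V E \<longleftrightarrow> connected_graph inc V E \<and> (\<forall>v\<in>V. degree inc E v = 2)"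

definition leaves :: "('e \<Rightarrow> 'v set) \<Rightarrow> 'v set \<Rightarrow> 'e set \<Rightarrow> 'v set" where
  "leaves inc V E = {v\<in>V. degree inc E v = 1}"

definition glen :: "('e \<Rightarrow> real) \<Rightarrow> 'e set \<Rightarrow> real" where
  "glen l E = (\<Sum>e\<in>E. l e)"

text \<open>Steiner distance sd_G(A): minimum length of a connected subgraph of G=(V,E)
  containing A. (The set is finite for finite G; we take its infimum.)\<close>
definition sd :: "('e \<Rightarrow> 'v set) \<Rightarrow> ('e \<Rightarrow> real) \<Rightarrow> 'v set \<Rightarrow> 'e set \<Rightarrow> 'v set \<Rightarrow> real" where
  "sd inc l V E A = Inf {glen l E' | V' E'. V' \<subseteq> V \<and> E' \<subseteq> E \<and> connected_graph inc V' E' \<and> A \<subseteq> V'}"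

definition shortcut_tree ::
  "('e \<Rightarrow> 'v set) \<Rightarrow> ('e \<Rightarrow> real) \<Rightarrow> 'v set \<Rightarrow> 'e set \<Rightarrow> 'v set \<Rightarrow> 'e set \<Rightarrow> bool" where
  "shortcut_tree inc l VT ET VH EH \<longleftrightarrow>
     is_tree inc VT ET \<and> is_graph inc VH EH \<and>
     (\<forall>e\<in>ET \<union> EH. l e > 0) \<and>
     VT \<inter> VH = leaves inc VT ET \<and>
     ET \<inter> EH = {} \<and>
     glen l ET < sd inc l VH EH (leaves inc VT ET) \<and>
     (\<forall>B. B \<subset> leaves inc VT ET \<longrightarrow> sd inc l VH EH B \<le> sd inc l VT ET B)"

end

theory Submission
  imports Defs
begin

text \<open>Let m be a longest edge of the cycle C and let e1, e2 meet at v. Since C - m is connected,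
  (SCT3) and (SCT4) for B = V(C) - {v} give sd_C(B) \<le> \<ell>(T) < sd_C(V(C)) \<le> \<ell>(C) - \<ell>(m). A connected
  subgraph of C containing B has at least |B| - 1 edges, so it misses either at most one edge of
  C or exactly the two edges at v; hence sd_C(B) \<ge> \<ell>(C) - max(\<ell>(m), \<ell>(e1) + \<ell>(e2)), which forces
  \<ell>(e1) + \<ell>(e2) > \<ell>(m) \<ge> \<ell>(e0). For the second claim, a cycle on at least three vertices has two
  adjacent edges different from e0, and together with e0 they already have length > 2\<ell>(e0).\<close>

lemma sum_degree_eq_sum_card_inc:
  assumes "finite K" "finite E"
  shows "(\<Sum>x\<in>K. degree inc E x) = (\<Sum>e\<in>E. card (inc e \<inter> K))"
proof -
  have "(\<Sum>x\<in>K. degree inc E x) = (\<Sum>x\<in>K. \<Sum>e\<in>E. if x \<in> inc e then 1 else 0)"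
    unfolding degree_def using assms(2) by (simp add: sum.If_cases Collect_conj_eq Int_commute)
  also have "\<dots> = (\<Sum>e\<in>E. \<Sum>x\<in>K. if x \<in> inc e then 1 else 0)"
    by (rule sum.swap)
  also have "\<dots> = (\<Sum>e\<in>E. card (inc e \<inter> K))"
    using assms(1) by (simp add: sum.If_cases Int_commute)
  finally show ?thesis .
qed

lemma sum_degree_eq_twice_card_edges:
  assumes "is_graph inc V E"
  shows "(\<Sum>x\<in>V. degree inc E x) = 2 * card E"
proof -
  have "(\<Sum>x\<in>V. degree inc E x) = (\<Sum>e\<in>E. card (inc e \<inter> V))"
    using assms by (simp add: sum_degree_eq_sum_card_inc is_graph_def)
  also have "\<dots> = (\<Sum>e\<in>E. 2)"
    using assms by (intro sum.cong) (auto simp: is_graph_def Int_absorb2)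
  finally show ?thesis by simp
qed

lemma even_sum_degree_if_closed:
  assumes "is_graph inc V E" "K \<subseteq> V" and closed: "\<forall>e\<in>E. inc e \<inter> K \<noteq> {} \<longrightarrow> inc e \<subseteq> K"
  shows "even (\<Sum>x\<in>K. degree inc E x)"
proof -
  have fin: "finite K" "finite E" using assms(1,2) finite_subset by (auto simp: is_graph_def)
  have "even (card (inc e \<inter> K))" if "e \<in> E" for e
    using closed assms(1) that by (cases "inc e \<inter> K = {}") (auto simp: is_graph_def Int_absorb2)
  then show ?thesis by (simp add: sum_degree_eq_sum_card_inc[OF fin] dvd_sum)
qed

lemma connected_graph_subset_if_closed:
  assumes "connected_graph inc V E" "a \<in> V" "a \<in> K"
    and closed: "\<forall>e\<in>E. inc e \<inter> K \<noteq> {} \<longrightarrow> inc e \<subseteq> K"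
  shows "V \<subseteq> K"
proof
  fix y assume "y \<in> V"
  with assms(1,2) have "(a, y) \<in> (adj_rel inc E)\<^sup>*" by (auto simp: connected_graph_def)
  then show "y \<in> K"
  proof (induction rule: rtrancl_induct)
    case (step y z)
    then show ?case using closed by (auto simp: adj_rel_def)
  qed (rule assms(3))
qed

lemma card_vertices_le_Suc_card_edges:
  assumes "connected_graph inc V E"
  shows "card V \<le> Suc (card E)"
proof -
  from assms have fin: "finite V" "finite E" and "V \<noteq> {}"
    and conn: "\<forall>u\<in>V. \<forall>v\<in>V. (u,v) \<in> (adj_rel inc E)\<^sup>*" by (auto simp: connected_graph_def is_graph_def)
  then obtain r where r: "r \<in> V" by blast
  define R where "R = adj_rel inc E"
  define d where "d x = (LEAST n. (r,x) \<in> R^^n)" for x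
  have dist: "(r,x) \<in> R^^(d x)" if "x \<in> V" for x
  proof -
    have "\<exists>n. (r,x) \<in> R^^n" using conn r that rtrancl_power unfolding R_def by blast
    then show ?thesis unfolding d_def by (rule LeastI_ex)
  qed
  have dist_le: "d x \<le> n" if "(r,x) \<in> R^^n" for x n
    unfolding d_def using that by (rule Least_le)
  text \<open>Every vertex other than r has an edge to a vertex one step closer to r; this parent
    edge determines the vertex, giving an injection of V - {r} into E.\<close>
  have parent: "\<exists>e y. e \<in> E \<and> inc e = {y,x} \<and> Suc (d y) \<le> d x" if x: "x \<in> V" "x \<noteq> r" for x
  proof -
    obtain k where k: "d x = Suc k" using dist[OF x(1)] x(2) by (cases "d x") auto
    then have "(r,x) \<in> R^^k O R" using dist[OF x(1)] by simp
    then obtain y where "(r,y) \<in> R^^k" "(y,x) \<in> R" by blast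
    moreover have "Suc (d y) \<le> d x" using dist_le[OF \<open>(r,y) \<in> R^^k\<close>] k by simp
    ultimately show ?thesis unfolding R_def adj_rel_def by blast
  qed
  then have "\<forall>x\<in>V - {r}. \<exists>e. \<exists>y. e \<in> E \<and> inc e = {y,x} \<and> Suc (d y) \<le> d x"
    by blast
  then obtain f where f: "\<And>x. x \<in> V - {r} \<Longrightarrow> \<exists>y. f x \<in> E \<and> inc (f x) = {y,x} \<and> Suc (d y) \<le> d x"
    by (metis bchoice)
  have "inj_on f (V - {r})"
  proof (rule inj_onI, rule ccontr)
    fix x x' assume x: "x \<in> V - {r}" "x' \<in> V - {r}" "f x = f x'" "x \<noteq> x'"
    obtain y y' where "inc (f x) = {y,x}" "Suc (d y) \<le> d x" "inc (f x') = {y',x'}" "Suc (d y') \<le> d x'"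
      using f x(1,2) by blast
    then have "y = x'" "y' = x" using x(3,4) by (auto simp: doubleton_eq_iff)
    with \<open>Suc (d y) \<le> d x\<close> \<open>Suc (d y') \<le> d x'\<close> show False by simp
  qed
  moreover have "f ` (V - {r}) \<subseteq> E" using f by blast
  ultimately have "card (V - {r}) \<le> card E" using fin card_inj_on_le by blast
  then show ?thesis using r fin by simp
qed

lemma cycle_card_edges:
  assumes "is_cycle inc V E"
  shows "card E = card V"
proof -
  have "2 * card E = (\<Sum>x\<in>V. degree inc E x)"
    using assms sum_degree_eq_twice_card_edges by (fastforce simp: is_cycle_def connected_graph_def)
  also have "\<dots> = 2 * card V"
    using assms by (simp add: is_cycle_def)
  finally show ?thesis by simp
qed

lemma cycle_other_edge_at:
  assumes "is_cycle inc V E" "e \<in> E" "x \<in> inc e"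
  obtains e' where "e' \<in> E" "e' \<noteq> e" "x \<in> inc e'"
proof -
  have "x \<in> V" using assms by (auto simp: is_cycle_def connected_graph_def is_graph_def)
  then have "card {e\<in>E. x \<in> inc e} = 2" using assms(1) by (simp add: is_cycle_def degree_def)
  then obtain p q where "{e\<in>E. x \<in> inc e} = {p,q}" "p \<noteq> q" by (auto simp: card_2_iff)
  then show ?thesis using that by (metis (mono_tags, lifting) insertCI mem_Collect_eq)
qed

lemma connected_cycle_delete_edge:
  assumes cyc: "is_cycle inc V E" and m: "m \<in> E"
  shows "connected_graph inc V (E - {m})"
proof -
  have g: "is_graph inc V E" and conn: "connected_graph inc V E"
    and deg: "\<forall>v\<in>V. degree inc E v = 2"
    using cyc by (auto simp: is_cycle_def connected_graph_def)
  have g': "is_graph inc V (E - {m})" using g by (auto simp: is_graph_def)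
  have fin: "finite V" using g by (simp add: is_graph_def)
  obtain a b where ab: "inc m = {a,b}" "a \<noteq> b" "a \<in> V" "b \<in> V"
    using g m by (auto simp: is_graph_def card_2_iff)
  define R where "R = adj_rel inc (E - {m})"
  define K where "K = {x\<in>V. (a,x) \<in> R\<^sup>*}"
  have aK: "a \<in> K" by (simp add: K_def ab(3))
  have K_closed: "inc e \<subseteq> K" if "e \<in> E - {m}" "inc e \<inter> K \<noteq> {}" for e
  proof -
    have "card (inc e) = 2" using g that(1) by (simp add: is_graph_def)
    then obtain p q where pq: "inc e = {p,q}" by (auto simp: card_2_iff)
    then have "(p,q) \<in> R" "(q,p) \<in> R" using that(1) by (auto simp: R_def adj_rel_def insert_commute)
    moreover have "p \<in> V" "q \<in> V" using g that(1) pq by (auto simp: is_graph_def)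
    ultimately show ?thesis using pq that(2) unfolding K_def by (auto intro: rtrancl_into_rtrancl)
  qed
  text \<open>Otherwise a would be the only vertex of odd degree in the component K of a in E - {m}.\<close>
  have bK: "b \<in> K"
  proof (rule ccontr)
    assume "b \<notin> K"
    have "degree inc (E - {m}) x = (if x = a then 1 else 2)" if "x \<in> K" for x
    proof -
      have "{e \<in> E - {m}. x \<in> inc e} = {e\<in>E. x \<in> inc e} - {m}" by auto
      then have "degree inc (E - {m}) x = degree inc E x - (if x \<in> inc m then 1 else 0)"
        unfolding degree_def using m by (simp add: card_Diff_singleton_if)
      then show ?thesis using deg that \<open>b \<notin> K\<close> ab(1) by (auto simp: K_def)
    qed
    then have "(\<Sum>x\<in>K. degree inc (E - {m}) x) = (\<Sum>x\<in>K. if x = a then 1 else 2)"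
      by simp
    also have "\<dots> = 1 + (\<Sum>x\<in>K - {a}. if x = a then 1 else 2)"
      using fin aK by (subst sum.remove[of K a]) (auto simp: K_def)
    also have "\<dots> = 1 + (\<Sum>x\<in>K - {a}. 2)" by (simp add: sum.cong[OF refl, of _ "\<lambda>_. 2"])
    also have "\<dots> = 1 + 2 * card (K - {a})" by simp
    finally have "odd (\<Sum>x\<in>K. degree inc (E - {m}) x)" by simp
    moreover have "even (\<Sum>x\<in>K. degree inc (E - {m}) x)"
      using even_sum_degree_if_closed[OF g'] K_closed by (auto simp: K_def)
    ultimately show False by contradiction
  qed
  have "\<forall>e\<in>E. inc e \<inter> K \<noteq> {} \<longrightarrow> inc e \<subseteq> K"
  proof (intro ballI impI)
    fix e assume "e \<in> E" "inc e \<inter> K \<noteq> {}"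
    then show "inc e \<subseteq> K" using K_closed[of e] ab(1) aK bK by (cases "e = m") simp_all
  qed
  then have "V \<subseteq> K" by (rule connected_graph_subset_if_closed[OF conn ab(3) aK])
  then have from_a: "(a,u) \<in> R\<^sup>*" if "u \<in> V" for u
    using that by (auto simp: K_def)
  have "R\<inverse> = R" unfolding R_def adj_rel_def by (auto simp: insert_commute)
  then have to_a: "(u,a) \<in> R\<^sup>*" if "u \<in> V" for u
    using rtrancl_converseI[OF from_a[OF that]] by simp
  have "\<forall>u\<in>V. \<forall>v\<in>V. (u,v) \<in> R\<^sup>*"
    using rtrancl_trans[OF to_a from_a] by blast
  then show ?thesis using g' ab(3) unfolding connected_graph_def R_def by auto
qed

lemma cycle_parallel_edges:
  assumes cyc: "is_cycle inc V E" and e: "e0 \<in> E" "e1 \<in> E" "e0 \<noteq> e1" "inc e0 = inc e1"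
  shows "V = inc e0"
proof
  have g: "is_graph inc V E" and conn: "connected_graph inc V E"
    using cyc by (auto simp: is_cycle_def connected_graph_def)
  show "inc e0 \<subseteq> V" using g e(1) by (simp add: is_graph_def)
  have at: "{e\<in>E. x \<in> inc e} = {e0,e1}" if "x \<in> inc e0" for x
  proof (rule card_seteq[symmetric])
    show "finite {e\<in>E. x \<in> inc e}" using g by (simp add: is_graph_def)
    show "{e0,e1} \<subseteq> {e\<in>E. x \<in> inc e}" using e that by auto
    have "x \<in> V" using \<open>inc e0 \<subseteq> V\<close> that by blast
    then show "card {e\<in>E. x \<in> inc e} \<le> card {e0,e1}"
      using cyc e(3) by (simp add: is_cycle_def degree_def)
  qed
  obtain a where "a \<in> inc e0" using g e(1) by (fastforce simp: is_graph_def)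
  have "\<forall>e\<in>E. inc e \<inter> inc e0 \<noteq> {} \<longrightarrow> inc e \<subseteq> inc e0"
  proof (intro ballI impI)
    fix e assume "e \<in> E" "inc e \<inter> inc e0 \<noteq> {}"
    then obtain x where "x \<in> inc e0" "e \<in> {e\<in>E. x \<in> inc e}" by blast
    then show "inc e \<subseteq> inc e0" using at e(4) by auto
  qed
  then show "V \<subseteq> inc e0"
    by (rule connected_graph_subset_if_closed[OF conn \<open>a \<in> inc e0\<close>[THEN subsetD[OF \<open>inc e0 \<subseteq> V\<close>]] \<open>a \<in> inc e0\<close>])
qed

lemma cycle_adjacent_edges_avoiding:
  assumes cyc: "is_cycle inc V E" and "3 \<le> card V" "e0 \<in> E"
  obtains e1 e2 where "e1 \<in> E" "e2 \<in> E" "e1 \<noteq> e2" "e1 \<noteq> e0" "e2 \<noteq> e0"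
    "inc e1 \<inter> inc e2 \<noteq> {}"
proof -
  have g: "is_graph inc V E" using cyc by (simp add: is_cycle_def connected_graph_def)
  have card_inc: "card (inc e) = 2" if "e \<in> E" for e using g that by (simp add: is_graph_def)
  obtain a b where ab: "inc e0 = {a,b}" "a \<noteq> b" using card_inc[OF \<open>e0 \<in> E\<close>] by (auto simp: card_2_iff)
  obtain e1 where e1: "e1 \<in> E" "e1 \<noteq> e0" "a \<in> inc e1"
    using cycle_other_edge_at[OF cyc \<open>e0 \<in> E\<close>, of a] ab(1) by auto
  obtain p q where "inc e1 = {p,q}" "p \<noteq> q" using card_inc[OF e1(1)] by (auto simp: card_2_iff)
  then obtain c where c: "c \<in> inc e1" "c \<noteq> a" by blast
  obtain e2 where e2: "e2 \<in> E" "e2 \<noteq> e1" "c \<in> inc e2"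
    by (rule cycle_other_edge_at[OF cyc e1(1) c(1)])
  have "e2 \<noteq> e0"
  proof
    assume "e2 = e0"
    then have "inc e0 \<subseteq> inc e1" using c e1(3) e2(3) ab by auto
    then have "inc e1 = inc e0"
      using card_inc e1(1) \<open>e0 \<in> E\<close> by (metis card.infinite card_seteq order_refl zero_neq_numeral)
    then have "V = inc e0" using cycle_parallel_edges[OF cyc \<open>e0 \<in> E\<close> e1(1)] e1(2) by simp
    then show False using \<open>3 \<le> card V\<close> card_inc[OF \<open>e0 \<in> E\<close>] by simp
  qed
  with e1 e2 c(1) show ?thesis by (intro that[of e1 e2]) auto
qed

lemma cycle_card_missing_edges:
  assumes cyc: "is_cycle inc V E" and sub: "V' \<subseteq> V" "E' \<subseteq> E" and conn: "connected_graph inc V' E'"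
  shows "card (E - E') \<le> Suc (card (V - V'))"
proof -
  have fin: "finite V" "finite E" using cyc by (auto simp: is_cycle_def connected_graph_def is_graph_def)
  have "V' \<noteq> {}" using conn by (simp add: connected_graph_def)
  then have "1 \<le> card V'" using fin(1) sub(1) by (meson card_0_eq finite_subset leI less_one)
  moreover have "card (E - E') = card V - card E'"
    using cycle_card_edges[OF cyc] fin sub(2) by (simp add: card_Diff_subset finite_subset)
  moreover have "card (V - V') = card V - card V'"
    using fin sub(1) by (simp add: card_Diff_subset finite_subset)
  moreover have "card V' \<le> card V" using fin sub(1) by (simp add: card_mono)
  ultimately show ?thesis using card_vertices_le_Suc_card_edges[OF conn] by linarith
qed

lemma sd_le_glen:
  assumes "finite E" "V' \<subseteq> V" "E' \<subseteq> E" "connected_graph inc V' E'" "A \<subseteq> V'"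
  shows "sd inc l V E A \<le> glen l E'"
  unfolding sd_def
proof (rule cInf_lower)
  let ?S = "{glen l E' |V' E'. V' \<subseteq> V \<and> E' \<subseteq> E \<and> connected_graph inc V' E' \<and> A \<subseteq> V'}"
  show "glen l E' \<in> ?S" using assms by blast
  have "?S \<subseteq> glen l ` Pow E" by blast
  then show "bdd_below ?S" using assms(1) by (meson bdd_below_finite finite_Pow_iff finite_imageI finite_subset)
qed

lemma glen_le_sd:
  assumes "V0 \<subseteq> V" "E0 \<subseteq> E" "connected_graph inc V0 E0" "A \<subseteq> V0"
    and "\<And>V' E'. V' \<subseteq> V \<Longrightarrow> E' \<subseteq> E \<Longrightarrow> connected_graph inc V' E' \<Longrightarrow> A \<subseteq> V' \<Longrightarrow> c \<le> glen l E'"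
  shows "c \<le> sd inc l V E A"
  unfolding sd_def using assms by (intro cInf_greatest) blast+

lemma sd_cycle_delete_vertex_ge:
  assumes cyc: "is_cycle inc V E"
    and e: "e1 \<in> E" "e2 \<in> E" "e1 \<noteq> e2" "v \<in> inc e1" "v \<in> inc e2"
    and nonneg: "\<forall>e\<in>E. 0 \<le> l e" and le_M: "\<forall>e\<in>E. l e \<le> M"
  shows "glen l E - max M (l e1 + l e2) \<le> sd inc l V E (V - {v})"
proof -
  have conn: "connected_graph inc V E" using cyc by (simp add: is_cycle_def)
  have fin: "finite E" using conn by (simp add: connected_graph_def is_graph_def)
  have "v \<in> V" using conn e by (auto simp: connected_graph_def is_graph_def)
  show ?thesis
  proof (rule glen_le_sd[OF order_refl order_refl conn Diff_subset])
    fix V' E' assume sub: "V' \<subseteq> V" "E' \<subseteq> E" and conn': "connected_graph inc V' E'"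
      and "V - {v} \<subseteq> V'"
    have finD: "finite (E - E')" using fin by simp
    have missing: "glen l (E - E') \<le> max M (l e1 + l e2)"
    proof (cases "v \<in> V'")
      case True
      then have "V - V' = {}" using \<open>V - {v} \<subseteq> V'\<close> by blast
      then have "card (E - E') \<le> 1"
        using cycle_card_missing_edges[OF cyc sub conn'] by (metis card.empty One_nat_def)
      then consider "E - E' = {}" | d where "d \<in> E" "E - E' = {d}"
        using finD by (metis One_nat_def card_1_singletonE card_0_eq le_Suc_eq le_zero_eq Diff_iff insertI1)
      then show ?thesis
      proof cases
        case 1
        show ?thesis unfolding 1 glen_def using nonneg e(1,2) by (simp add: le_max_iff_disj)
      next
        case (2 d)
        then show ?thesis using le_M by (simp add: glen_def le_max_iff_disj)
      qed
    next
      case False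
      then have "V - V' = {v}" using \<open>V - {v} \<subseteq> V'\<close> \<open>v \<in> V\<close> by blast
      then have "card (E - E') \<le> 2"
        using cycle_card_missing_edges[OF cyc sub conn'] by simp
      moreover have "inc e \<subseteq> V'" if "e \<in> E'" for e
        using conn' that by (simp add: connected_graph_def is_graph_def)
      then have "{e1,e2} \<subseteq> E - E'" using e False by blast
      ultimately have "E - E' = {e1,e2}" using card_seteq[OF finD] e(3) by (metis card_2_iff)
      then show ?thesis using e(3) by (simp add: glen_def)
    qed
    have "glen l E = glen l E' + glen l (E - E')"
      unfolding glen_def using fin sub(2) by (simp add: sum_diff finite_subset)
    with missing show "glen l E - max M (l e1 + l e2) \<le> glen l E'" by simp
  qed
qed

lemma shortcut_tree_cycle_adjacent_edges:
  assumes cyc: "is_cycle inc VC EC" and st: "shortcut_tree inc l VT ET VC EC"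
    and leaves: "VC = leaves inc VT ET"
    and e: "e1 \<in> EC" "e2 \<in> EC" "e1 \<noteq> e2" "inc e1 \<inter> inc e2 \<noteq> {}" and "e \<in> EC"
  shows "l e < l e1 + l e2"
proof -
  have conn_C: "connected_graph inc VC EC" using cyc by (simp add: is_cycle_def)
  have conn_T: "connected_graph inc VT ET" using st by (simp add: shortcut_tree_def is_tree_def)
  have pos: "\<forall>e\<in>EC. 0 < l e" using st by (simp add: shortcut_tree_def)
  have sct3: "glen l ET < sd inc l VC EC (leaves inc VT ET)" using st by (simp add: shortcut_tree_def)
  have sct4: "\<forall>B. B \<subset> leaves inc VT ET \<longrightarrow> sd inc l VC EC B \<le> sd inc l VT ET B"
    using st by (simp add: shortcut_tree_def)
  have g_C: "is_graph inc VC EC" and g_T: "is_graph inc VT ET"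
    using conn_C conn_T by (simp_all add: connected_graph_def)
  then have fin_C: "finite EC" and fin_T: "finite ET" by (simp_all add: is_graph_def)
  obtain v where v: "v \<in> inc e1" "v \<in> inc e2" using e(4) by blast
  then have "v \<in> VC" using g_C e(1) by (auto simp: is_graph_def)
  define M where "M = Max (l ` EC)"
  have "M \<in> l ` EC" unfolding M_def using fin_C \<open>e \<in> EC\<close> by (intro Max_in) auto
  then obtain m where m: "m \<in> EC" "l m = M" by blast
  have le_M: "\<forall>e\<in>EC. l e \<le> M" unfolding M_def using fin_C by simp
  have "sd inc l VC EC (VC - {v}) \<le> sd inc l VT ET (VC - {v})"
    using sct4 \<open>v \<in> VC\<close> leaves by blast
  also have "\<dots> \<le> glen l ET"
    using leaves by (intro sd_le_glen[OF fin_T order_refl order_refl conn_T]) (auto simp: leaves_def)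
  also have "\<dots> < sd inc l VC EC (leaves inc VT ET)" by (rule sct3)
  also have "\<dots> \<le> glen l (EC - {m})"
    using sd_le_glen[OF fin_C order_refl Diff_subset connected_cycle_delete_edge[OF cyc m(1)]] leaves
    by simp
  also have "\<dots> = glen l EC - M"
    unfolding glen_def using fin_C m by (simp add: sum_diff1)
  finally have "sd inc l VC EC (VC - {v}) < glen l EC - M" .
  moreover have "glen l EC - max M (l e1 + l e2) \<le> sd inc l VC EC (VC - {v})"
    using pos le_M by (intro sd_cycle_delete_vertex_ge[OF cyc e(1-3) v]) (auto intro: less_imp_le)
  ultimately have "M < l e1 + l e2" by (simp add: max_def split: if_splits)
  then show ?thesis using le_M \<open>e \<in> EC\<close> by force
qed

theorem lemma5p4:
  fixes inc :: "'e \<Rightarrow> 'v set" and l :: "'e \<Rightarrow> real"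
    and VT VC :: "'v set" and ET EC :: "'e set"
  assumes "is_cycle inc VC EC"
    and "shortcut_tree inc l VT ET VC EC"
    and "VC = leaves inc VT ET"
    and "card (leaves inc VT ET) \<ge> 3"
    and "\<forall>v\<in>VT. degree inc ET v \<noteq> 2"
    and "e0 \<in> EC"
  shows "(\<forall>e1\<in>EC. \<forall>e2\<in>EC. e1 \<noteq> e2 \<and> inc e1 \<inter> inc e2 \<noteq> {} \<longrightarrow> l e1 + l e2 > l e0)
         \<and> l e0 < glen l EC / 2"
proof
  show "\<forall>e1\<in>EC. \<forall>e2\<in>EC. e1 \<noteq> e2 \<and> inc e1 \<inter> inc e2 \<noteq> {} \<longrightarrow> l e1 + l e2 > l e0"
    using shortcut_tree_cycle_adjacent_edges[OF assms(1-3) _ _ _ _ assms(6)] by simp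
  have "3 \<le> card VC" using assms(3,4) by simp
  then obtain e1 e2 where e: "e1 \<in> EC" "e2 \<in> EC" "e1 \<noteq> e2" "e1 \<noteq> e0" "e2 \<noteq> e0"
      and adjacent: "inc e1 \<inter> inc e2 \<noteq> {}"
    by (rule cycle_adjacent_edges_avoiding[OF assms(1) _ assms(6)])
  have "l e0 < l e1 + l e2"
    by (rule shortcut_tree_cycle_adjacent_edges[OF assms(1-3) e(1-3) adjacent assms(6)])
  moreover have "l e0 + l e1 + l e2 \<le> glen l EC"
  proof -
    have "l e0 + l e1 + l e2 = glen l {e0, e1, e2}"
      using e by (simp add: glen_def)
    also have "\<dots> \<le> glen l EC"
      using assms(1,2,6) e(1,2)
      unfolding glen_def is_cycle_def connected_graph_def is_graph_def shortcut_tree_def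
      by (intro sum_mono2) (auto intro: less_imp_le)
    finally show ?thesis .
  qed
  ultimately show "l e0 < glen l EC / 2" by linarith
qed

end
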